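(* Let $G$ be a finite simple graph on $[d]$, $k\ge1$, $<$ a monomial order on $R[G]$, and let $\{m_1,\dots,m_s\}$ be the set of all standard monomials of degree $k$ with respect to ${\rm in}_<(K_G)$. Then each $m_i$ equals ${\bf x}_{f_i}$ for a $k$-coloring $f_i$ of an induced subgraph of $G$; namely $m_i=x_{S_1}\cdots x_{S_k}$ with $S_1,\dots,S_k$ pairwise disjoint stable sets and $f_i$ is the coloring of $G[S_1\cup\dots\cup S_k]$ with $f_i(v)=\ell$ for $v\in S_\ell$. Moreover, for every induced subgraph $G'$ of $G$, the set $\{f_1,\dots,f_s\}\cap\mathcal{C}_k(G')$ is a complete representative system for ${\rm kc}(G',k)$.
   Context: A $k$-coloring of a graph $H$ is a map $f:V(H)\to[k]$ (not necessarily surjective) with $f(u)\neq f(v)$ for every edge; $\mathcal{C}_k(H)$ is the set of $k$-colorings of $H$. A Kempe switching: for colors $i<j$ and a connected component $C$ of $H[f^{-1}(i)\cup f^{-1}(j)]$, interchange $i$ and $j$ on $C$. Kempe equivalence $\sim_k$ is the equivalence relation generated by Kempe switchings, and ${\rm kc}(H,k)=\mathcal{C}_k(H)/\!\sim_k$. Colorings differing only by a permutation of colors are identified. A stable set of $G$ is a subset of $[d]$ with no edge of $G$ (including $\emptyset$ and singletons); $S(G)$ is the set of stable sets; $R[G]=\mathbb{K}[x_S : S\in S(G)]$ over a field $\mathbb{K}$, all variables of degree $1$. For a $k$-coloring $f$ of an induced subgraph, ${\bf x}_f=\prod_{\ell=1}^k x_{f^{-1}(\ell)}$. $J_G$ is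 the ideal generated by all ${\bf x}_f-{\bf x}_g$ with $f,g$ $2$-colorings of a common induced subgraph of $G$; $M_G=\langle x_Sx_T : S,T\in S(G),\ S\cap T\neq\emptyset\rangle$; $K_G=J_G+M_G$. A monomial is standard w.r.t. ${\rm in}_<(K_G)$ (the ideal generated by leading monomials of nonzero elements of $K_G$) if it does not lie in it. *)

theory Defs
  imports "HOL-Library.Poly_Mapping"
begin

definition simple_graph_on :: "nat \<Rightarrow> (nat \<Rightarrow> nat \<Rightarrow> bool) \<Rightarrow> bool" where
  "simple_graph_on d E \<longleftrightarrow> (\<forall>u v. E u v \<longrightarrow> E v u) \<and> (\<forall>v. \<not> E v v)
     \<and> (\<forall>u v. E u v \<longrightarrow> u \<in> {1..d} \<and> v \<in> {1..d})"

definition stable_sets :: "nat \<Rightarrow> (nat \<Rightarrow> nat \<Rightarrow> bool) \<Rightarrow> nat set set" where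
  "stable_sets d E = {S. S \<subseteq> {1..d} \<and> (\<forall>u\<in>S. \<forall>v\<in>S. \<not> E u v)}"

definition colorings :: "nat \<Rightarrow> (nat \<Rightarrow> nat \<Rightarrow> bool) \<Rightarrow> nat set \<Rightarrow> (nat \<Rightarrow> nat option) set" where
  "colorings k E W = {f. dom f = W \<and> ran f \<subseteq> {1..k} \<and>
      (\<forall>u\<in>W. \<forall>v\<in>W. E u v \<longrightarrow> f u \<noteq> f v)}"

definition component_of :: "(nat \<Rightarrow> nat \<Rightarrow> bool) \<Rightarrow> nat set \<Rightarrow> nat \<Rightarrow> nat set" where
  "component_of E A v = {u. u \<in> A \<and> (\<lambda>x y. x \<in> A \<and> y \<in> A \<and> E x y)\<^sup>*\<^sup>* v u}"

definition kempe_switch :: "nat \<Rightarrow> (nat \<Rightarrow> nat \<Rightarrow> bool) \<Rightarrow> nat set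
    \<Rightarrow> (nat \<Rightarrow> nat option) \<Rightarrow> (nat \<Rightarrow> nat option) \<Rightarrow> bool" where
  "kempe_switch k E W f g \<longleftrightarrow> f \<in> colorings k E W \<and>
     (\<exists>i j v. 1 \<le> i \<and> i < j \<and> j \<le> k \<and>
        (let A = {x \<in> W. f x = Some i \<or> f x = Some j}; C = component_of E A v in
          v \<in> A \<and>
          g = (\<lambda>x. if x \<in> C then (if f x = Some i then Some j else Some i) else f x)))"

definition color_perm :: "nat \<Rightarrow> (nat \<Rightarrow> nat \<Rightarrow> bool) \<Rightarrow> nat set
    \<Rightarrow> (nat \<Rightarrow> nat option) \<Rightarrow> (nat \<Rightarrow> nat option) \<Rightarrow> bool" where
  "color_perm k E W f g \<longleftrightarrow> f \<in> colorings k E W \<and>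
     (\<exists>\<sigma>. bij_betw \<sigma> {1..k} {1..k} \<and> g = map_option \<sigma> \<circ> f)"

text \<open>Kempe equivalence on C_k(G[W]) (with colour permutations identified): the
equivalence relation generated by Kempe switchings and colour permutations.\<close>
definition kempe_equiv :: "nat \<Rightarrow> (nat \<Rightarrow> nat \<Rightarrow> bool) \<Rightarrow> nat set
    \<Rightarrow> (nat \<Rightarrow> nat option) \<Rightarrow> (nat \<Rightarrow> nat option) \<Rightarrow> bool" where
  "kempe_equiv k E W = (\<lambda>f g. kempe_switch k E W f g \<or> kempe_switch k E W g f
        \<or> color_perm k E W f g \<or> color_perm k E W g f)\<^sup>*\<^sup>*"

type_synonym monom = "nat set \<Rightarrow>\<^sub>0 nat"
type_synonym 'a mpoly = "monom \<Rightarrow>\<^sub>0 'a"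

text \<open>Monomials of R[G]: exponent vectors supported on stable sets.\<close>
definition monoms :: "nat \<Rightarrow> (nat \<Rightarrow> nat \<Rightarrow> bool) \<Rightarrow> monom set" where
  "monoms d E = {m. Poly_Mapping.keys m \<subseteq> stable_sets d E}"

definition polys :: "nat \<Rightarrow> (nat \<Rightarrow> nat \<Rightarrow> bool) \<Rightarrow> 'a::field mpoly set" where
  "polys d E = {p. Poly_Mapping.keys p \<subseteq> monoms d E}"

definition mdeg :: "monom \<Rightarrow> nat" where
  "mdeg m = (\<Sum>S\<in>Poly_Mapping.keys m. Poly_Mapping.lookup m S)"

definition mono_poly :: "monom \<Rightarrow> 'a::field mpoly" where
  "mono_poly m = Poly_Mapping.single m 1"

definition ideal_gen :: "nat \<Rightarrow> (nat \<Rightarrow> nat \<Rightarrow> bool) \<Rightarrow> 'a::field mpoly set \<Rightarrow> 'a mpoly set" where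
  "ideal_gen d E B = {p. \<exists>n (q :: nat \<Rightarrow> 'a mpoly) (g :: nat \<Rightarrow> 'a mpoly). (\<forall>i<n. q i \<in> polys d E \<and> g i \<in> B) \<and> p = (\<Sum>i<n. q i * g i)}"

definition xmon :: "nat \<Rightarrow> (nat \<Rightarrow> nat option) \<Rightarrow> monom" where
  "xmon k f = (\<Sum>l\<in>{1..k}. Poly_Mapping.single {v. f v = Some l} 1)"

definition J_gens :: "nat \<Rightarrow> (nat \<Rightarrow> nat \<Rightarrow> bool) \<Rightarrow> 'a::field mpoly set" where
  "J_gens d E = {mono_poly (xmon 2 f) - mono_poly (xmon 2 g) | W f g.
      W \<subseteq> {1..d} \<and> f \<in> colorings 2 E W \<and> g \<in> colorings 2 E W}"

definition M_gens :: "nat \<Rightarrow> (nat \<Rightarrow> nat \<Rightarrow> bool) \<Rightarrow> 'a::field mpoly set" where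
  "M_gens d E = {mono_poly (Poly_Mapping.single S 1 + Poly_Mapping.single T 1) | S T.
      S \<in> stable_sets d E \<and> T \<in> stable_sets d E \<and> S \<inter> T \<noteq> {}}"

definition K_ideal :: "nat \<Rightarrow> (nat \<Rightarrow> nat \<Rightarrow> bool) \<Rightarrow> 'a::field mpoly set" where
  "K_ideal d E = ideal_gen d E (J_gens d E \<union> M_gens d E)"

definition monomial_order :: "nat \<Rightarrow> (nat \<Rightarrow> nat \<Rightarrow> bool) \<Rightarrow> (monom \<Rightarrow> monom \<Rightarrow> bool) \<Rightarrow> bool" where
  "monomial_order d E ord \<longleftrightarrow>
     (\<forall>a\<in>monoms d E. \<not> ord a a) \<and>
     (\<forall>a\<in>monoms d E. \<forall>b\<in>monoms d E. \<forall>c\<in>monoms d E. ord a b \<longrightarrow> ord b c \<longrightarrow> ord a c) \<and>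
     (\<forall>a\<in>monoms d E. \<forall>b\<in>monoms d E. a \<noteq> b \<longrightarrow> ord a b \<or> ord b a) \<and>
     (\<forall>a\<in>monoms d E. \<forall>b\<in>monoms d E. \<forall>c\<in>monoms d E. ord a b \<longrightarrow> ord (a + c) (b + c)) \<and>
     wfP (\<lambda>a b. a \<in> monoms d E \<and> b \<in> monoms d E \<and> ord a b)"

definition lead_mon :: "(monom \<Rightarrow> monom \<Rightarrow> bool) \<Rightarrow> 'a::field mpoly \<Rightarrow> monom" where
  "lead_mon ord p = (THE m. m \<in> Poly_Mapping.keys p \<and> (\<forall>n\<in>Poly_Mapping.keys p. n \<noteq> m \<longrightarrow> ord n m))"

definition init_ideal :: "nat \<Rightarrow> (nat \<Rightarrow> nat \<Rightarrow> bool) \<Rightarrow> (monom \<Rightarrow> monom \<Rightarrow> bool)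
    \<Rightarrow> 'a::field mpoly set \<Rightarrow> 'a mpoly set" where
  "init_ideal d E ord I = ideal_gen d E {mono_poly (lead_mon ord p) | p. p \<in> I \<and> p \<noteq> 0}"

definition std_monoms :: "'a::field itself \<Rightarrow> nat \<Rightarrow> (nat \<Rightarrow> nat \<Rightarrow> bool)
    \<Rightarrow> (monom \<Rightarrow> monom \<Rightarrow> bool) \<Rightarrow> nat \<Rightarrow> monom set" where
  "std_monoms _ d E ord k = {m \<in> monoms d E. mdeg m = k \<and>
      (mono_poly m :: 'a mpoly) \<notin> init_ideal d E ord (K_ideal d E)}"

end

theory Submission
  imports Defs
begin

text \<open>
  Kempe switchings change the monomial \<open>x\<^sub>g\<close> of a coloring by a multiple of a binomial
  generator of \<open>J\<^sub>G\<close>, so Kempe equivalent colorings \<open>f, g\<close> have \<open>x\<^sub>f - x\<^sub>g \<in> K\<^sub>G\<close>, and a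
  Kempe class contains at most one standard monomial. Conversely, let \<open>C\<close> be the set of
  monomials \<open>x\<^sub>g\<close> of one Kempe class. Multiplying a generator of \<open>M\<^sub>G\<close> never produces a
  monomial in \<open>C\<close>, and multiplying a generator \<open>x\<^sub>a - x\<^sub>b\<close> of \<open>J\<^sub>G\<close> by a monomial gives two
  monomials that are both in \<open>C\<close> or both outside it, because any two 2-colorings of the same
  vertex set are Kempe equivalent. Hence the sum of the coefficients over \<open>C\<close> vanishes on
  \<open>K\<^sub>G\<close>, and the least monomial of \<open>C\<close> cannot be a leading monomial of \<open>K\<^sub>G\<close>: it is standard.
  Finally, a standard monomial is not divisible by any \<open>x\<^sub>S x\<^sub>T\<close> with \<open>S \<inter> T \<noteq> {}\<close>, so its
  \<open>k\<close> factors are pairwise disjoint stable sets, the colour classes of a coloring.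
\<close>

section \<open>The ring R[G] and its ideals\<close>

lemma zero_in_monoms [simp]: "0 \<in> monoms d E"
  unfolding monoms_def by simp

lemma monoms_add: "a \<in> monoms d E \<Longrightarrow> b \<in> monoms d E \<Longrightarrow> a + b \<in> monoms d E"
  unfolding monoms_def using keys_add[of a b] by blast

lemma monoms_sum: "(\<And>i. i \<in> I \<Longrightarrow> f i \<in> monoms d E) \<Longrightarrow> sum f I \<in> monoms d E"
  by (induction I rule: infinite_finite_induct) (auto intro: monoms_add)

lemma monoms_single: "S \<in> stable_sets d E \<Longrightarrow> Poly_Mapping.single S 1 \<in> monoms d E"
  unfolding monoms_def by simp

lemma monoms_add_left: "a + b \<in> monoms d E \<Longrightarrow> a \<in> monoms d E"
  unfolding monoms_def by (auto simp: in_keys_iff lookup_add)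

lemma zero_in_polys [simp]: "0 \<in> polys d E"
  unfolding polys_def by simp

lemma one_in_polys [simp]: "1 \<in> polys d E"
  unfolding polys_def by simp

lemma polys_add: "p \<in> polys d E \<Longrightarrow> q \<in> polys d E \<Longrightarrow> p + q \<in> polys d E"
  unfolding polys_def using keys_add[of p q] by blast

lemma polys_mult: "p \<in> polys d E \<Longrightarrow> q \<in> polys d E \<Longrightarrow> p * q \<in> polys d E"
  unfolding polys_def using keys_mult[of p q] by (blast intro: monoms_add)

lemma polys_diff: "p \<in> polys d E \<Longrightarrow> q \<in> polys d E \<Longrightarrow> p - q \<in> polys d E"
  unfolding polys_def using keys_diff[of p q] by blast

lemma polys_sum: "(\<And>i. i \<in> I \<Longrightarrow> f i \<in> polys d E) \<Longrightarrow> sum f I \<in> polys d E"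
  by (induction I rule: infinite_finite_induct) (auto intro: polys_add)

lemma polys_mono_poly: "m \<in> monoms d E \<Longrightarrow> mono_poly m \<in> polys d E"
  unfolding polys_def mono_poly_def by simp

lemma mono_poly_mult: "mono_poly a * mono_poly b = (mono_poly (a + b) :: 'a::field mpoly)"
  unfolding mono_poly_def by (simp add: mult_single)

lemma mono_poly_nonzero [simp]: "(mono_poly m :: 'a::field mpoly) \<noteq> 0"
  unfolding mono_poly_def by (metis lookup_single_eq lookup_zero one_neq_zero)

lemma keys_mono_poly [simp]: "Poly_Mapping.keys (mono_poly m :: 'a::field mpoly) = {m}"
  unfolding mono_poly_def by simp

lemma poly_mapping_expand:
  "p = (\<Sum>u\<in>Poly_Mapping.keys p. Poly_Mapping.single u (Poly_Mapping.lookup p u))"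
  by (rule poly_mapping_eqI) (auto simp: lookup_sum lookup_single when_def in_keys_iff sum.delta)

lemma mono_poly_mult_expand:
  "mono_poly u * (p :: 'a::field mpoly) =
     (\<Sum>n\<in>Poly_Mapping.keys p. Poly_Mapping.single (u + n) (Poly_Mapping.lookup p n))"
  by (subst poly_mapping_expand[of p]) (simp add: sum_distrib_left mono_poly_def mult_single)

lemma lookup_mono_poly_mult:
  "Poly_Mapping.lookup (mono_poly u * p) (u + l) = (Poly_Mapping.lookup p l :: 'a::field)"
  unfolding mono_poly_mult_expand lookup_sum
  by (simp add: lookup_single when_def sum.delta in_keys_iff)

lemma keys_mono_poly_mult:
  "Poly_Mapping.keys (mono_poly u * (p :: 'a::field mpoly)) = (+) u ` Poly_Mapping.keys p"
proof (intro equalityI subsetI)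
  fix x assume "x \<in> Poly_Mapping.keys (mono_poly u * p)"
  then show "x \<in> (+) u ` Poly_Mapping.keys p"
    using keys_mult[of "mono_poly u" p] by auto
qed (auto simp: in_keys_iff lookup_mono_poly_mult)

lemma sum_remove_two:
  assumes "finite L" "l \<in> L" "l' \<in> L" "l \<noteq> l'"
  shows "sum F L = F l + (F l' + sum F (L - {l} - {l'}))"
  using sum.remove[OF assms(1,2), of F] sum.remove[of "L - {l}" l' F] assms by simp

lemma ideal_genI:
  fixes n :: nat
  assumes "\<And>i. i < n \<Longrightarrow> q i \<in> polys d E" "\<And>i. i < n \<Longrightarrow> g i \<in> B"
  shows "(\<Sum>i<n. q i * g i) \<in> ideal_gen d E B"
  unfolding ideal_gen_def using assms by blast

lemma ideal_genE:
  assumes "p \<in> ideal_gen d E B"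
  obtains n :: nat and q g where "\<forall>i<n. q i \<in> polys d E \<and> g i \<in> B" "p = (\<Sum>i<n. q i * g i)"
  using assms unfolding ideal_gen_def mem_Collect_eq by blast

lemma ideal_gen_subset_polys: "B \<subseteq> polys d E \<Longrightarrow> ideal_gen d E B \<subseteq> polys d E"
  unfolding ideal_gen_def by (auto intro!: polys_sum polys_mult)

lemma ideal_gen_generator: "g \<in> B \<Longrightarrow> g \<in> ideal_gen d E B"
  unfolding ideal_gen_def
  by (intro CollectI exI[of _ 1] exI[of _ "\<lambda>_. 1"] exI[of _ "\<lambda>_. g"]) simp

lemma ideal_gen_zero: "0 \<in> ideal_gen d E B"
  unfolding ideal_gen_def by (intro CollectI exI[of _ 0]) simp

lemma ideal_gen_add:
  assumes "p \<in> ideal_gen d E B" "p' \<in> ideal_gen d E B"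
  shows "p + p' \<in> ideal_gen d E B"
proof -
  obtain n :: nat and q g where h: "\<forall>i<n. q i \<in> polys d E \<and> g i \<in> B" "p = (\<Sum>i<n. q i * g i)"
    using assms(1) by (rule ideal_genE)
  obtain n' :: nat and q' g' where h': "\<forall>i<n'. q' i \<in> polys d E \<and> g' i \<in> B" "p' = (\<Sum>i<n'. q' i * g' i)"
    using assms(2) by (rule ideal_genE)
  define Q where "Q i = (if i < n then q i else q' (i - n))" for i
  define G where "G i = (if i < n then g i else g' (i - n))" for i
  have split: "(\<Sum>i<n + m. h i) = (\<Sum>i<n. h i) + (\<Sum>i<m. h (n + i))" for m and h :: "nat \<Rightarrow> 'a mpoly"
    by (induction m) (simp_all add: add.assoc)
  have "p + p' = (\<Sum>i<n + n'. Q i * G i)"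
    unfolding split using h h' by (simp add: Q_def G_def)
  also have "\<dots> \<in> ideal_gen d E B"
    by (rule ideal_genI) (use h h' in \<open>auto simp: Q_def G_def\<close>)
  finally show ?thesis .
qed

lemma ideal_gen_mult:
  assumes "p \<in> ideal_gen d E B" "r \<in> polys d E"
  shows "r * p \<in> ideal_gen d E B"
proof -
  obtain n :: nat and q g where h: "\<forall>i<n. q i \<in> polys d E \<and> g i \<in> B" "p = (\<Sum>i<n. q i * g i)"
    using assms(1) by (rule ideal_genE)
  have "r * p = (\<Sum>i<n. (r * q i) * g i)"
    using h by (simp add: sum_distrib_left mult.assoc)
  also have "\<dots> \<in> ideal_gen d E B"
    by (rule ideal_genI) (use h assms(2) in \<open>auto intro: polys_mult\<close>)
  finally show ?thesis .
qed

lemma ideal_gen_diff: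
  assumes "p \<in> ideal_gen d E B" "p' \<in> ideal_gen d E B"
  shows "p - p' \<in> ideal_gen d E B"
proof -
  have "- 1 \<in> polys d E"
    using polys_diff[OF zero_in_polys one_in_polys] by simp
  from ideal_gen_mult[OF assms(2) this] have "- p' \<in> ideal_gen d E B"
    by simp
  then show ?thesis
    unfolding diff_conv_add_uminus by (rule ideal_gen_add[OF assms(1)])
qed

lemma mono_poly_in_monomial_ideal:
  assumes "(mono_poly m :: 'a::field mpoly) \<in> ideal_gen d E (mono_poly ` L)"
  obtains u l where "u \<in> monoms d E" "l \<in> L" "m = u + l"
proof -
  obtain n :: nat and q g where h: "\<forall>i<n. q i \<in> polys d E \<and> g i \<in> mono_poly ` L"
    "(mono_poly m :: 'a mpoly) = (\<Sum>i<n. q i * g i)"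
    using assms by (rule ideal_genE)
  have "(\<Sum>i<n. Poly_Mapping.lookup (q i * g i) m) = Poly_Mapping.lookup (mono_poly m :: 'a mpoly) m"
    unfolding h(2) by (simp add: lookup_sum)
  also have "\<dots> \<noteq> 0" by (simp add: mono_poly_def)
  finally obtain i where i: "i < n" "Poly_Mapping.lookup (q i * g i) m \<noteq> 0"
    by (meson lessThan_iff sum.not_neutral_contains_not_neutral)
  obtain l where l: "l \<in> L" "g i = mono_poly l" using h(1) i(1) by blast
  have "m \<in> Poly_Mapping.keys (mono_poly l * q i)"
    using i(2) l(2) by (simp add: in_keys_iff mult.commute)
  then obtain u where "u \<in> Poly_Mapping.keys (q i)" "m = u + l"
    unfolding keys_mono_poly_mult by (auto simp: add.commute)
  moreover have "Poly_Mapping.keys (q i) \<subseteq> monoms d E"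
    using h(1) i(1) by (simp add: polys_def)
  ultimately show ?thesis using that l(1) by blast
qed

section \<open>Leading monomials and initial ideals\<close>

lemma lead_mon_mono_poly: "lead_mon ord (mono_poly m :: 'a::field mpoly) = m"
  unfolding lead_mon_def by (rule the_equality) auto

context
  fixes d :: nat and E :: "nat \<Rightarrow> nat \<Rightarrow> bool" and ord :: "monom \<Rightarrow> monom \<Rightarrow> bool"
  assumes mo: "monomial_order d E ord"
begin

lemma ord_irrefl: "a \<in> monoms d E \<Longrightarrow> \<not> ord a a"
  using mo unfolding monomial_order_def by blast

lemma ord_trans:
  "a \<in> monoms d E \<Longrightarrow> b \<in> monoms d E \<Longrightarrow> c \<in> monoms d E \<Longrightarrow> ord a b \<Longrightarrow> ord b c \<Longrightarrow> ord a c"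
  using mo unfolding monomial_order_def by blast

lemma ord_total: "a \<in> monoms d E \<Longrightarrow> b \<in> monoms d E \<Longrightarrow> a \<noteq> b \<Longrightarrow> ord a b \<or> ord b a"
  using mo unfolding monomial_order_def by blast

lemma ord_add_left:
  "a \<in> monoms d E \<Longrightarrow> b \<in> monoms d E \<Longrightarrow> u \<in> monoms d E \<Longrightarrow> ord a b \<Longrightarrow> ord (u + a) (u + b)"
  using mo unfolding monomial_order_def by (metis add.commute)

lemma wfP_ord: "wfP (\<lambda>a b. a \<in> monoms d E \<and> b \<in> monoms d E \<and> ord a b)"
  using mo unfolding monomial_order_def by blast

lemma finite_has_ord_greatest:
  assumes "finite F" "F \<noteq> {}" "F \<subseteq> monoms d E"
  shows "\<exists>m\<in>F. \<forall>n\<in>F. n \<noteq> m \<longrightarrow> ord n m"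
  using assms
proof (induction F rule: finite_ne_induct)
  case (insert x F)
  then obtain m where m: "m \<in> F" "\<forall>n\<in>F. n \<noteq> m \<longrightarrow> ord n m" by auto
  show ?case
  proof (cases "ord m x")
    case True
    then have "\<forall>n\<in>F. ord n x"
      using m insert.prems by (metis in_mono insert_subset ord_trans)
    then show ?thesis by blast
  next
    case False
    then have "ord x m" using ord_total[of x m] m insert by auto
    then show ?thesis using m by auto
  qed
qed simp

lemma lead_mon_eqI:
  assumes "Poly_Mapping.keys p \<subseteq> monoms d E" "m \<in> Poly_Mapping.keys p"
    and "\<forall>n\<in>Poly_Mapping.keys p. n \<noteq> m \<longrightarrow> ord n m"
  shows "lead_mon ord p = m"
  unfolding lead_mon_def
proof (rule the_equality)
  fix m' assume m': "m' \<in> Poly_Mapping.keys p \<and> (\<forall>n\<in>Poly_Mapping.keys p. n \<noteq> m' \<longrightarrow> ord n m')"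
  show "m' = m"
  proof (rule ccontr)
    assume "m' \<noteq> m"
    then have "ord m m'" "ord m' m" using assms(2,3) m' by auto
    then have "ord m m" using assms(1,2) m' ord_trans[of m m' m] by blast
    then show False using assms ord_irrefl by blast
  qed
qed (use assms in blast)

lemma lead_mon_greatest:
  assumes "p \<in> polys d E" "p \<noteq> 0"
  shows "lead_mon ord p \<in> Poly_Mapping.keys p"
    and "\<And>n. n \<in> Poly_Mapping.keys p \<Longrightarrow> n \<noteq> lead_mon ord p \<Longrightarrow> ord n (lead_mon ord p)"
proof -
  have keys: "Poly_Mapping.keys p \<subseteq> monoms d E" using assms(1) by (simp add: polys_def)
  then obtain m where m: "m \<in> Poly_Mapping.keys p" "\<forall>n\<in>Poly_Mapping.keys p. n \<noteq> m \<longrightarrow> ord n m"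
    using finite_has_ord_greatest[of "Poly_Mapping.keys p"] assms(2) by auto
  with keys have "lead_mon ord p = m" by (rule lead_mon_eqI)
  with m show "lead_mon ord p \<in> Poly_Mapping.keys p"
    and "\<And>n. n \<in> Poly_Mapping.keys p \<Longrightarrow> n \<noteq> lead_mon ord p \<Longrightarrow> ord n (lead_mon ord p)"
    by auto
qed

lemma lead_mon_mono_poly_mult:
  assumes "p \<in> polys d E" "p \<noteq> 0" "u \<in> monoms d E"
  shows "lead_mon ord (mono_poly u * p) = u + lead_mon ord p"
proof (rule lead_mon_eqI)
  let ?l = "lead_mon ord p"
  have keys: "Poly_Mapping.keys p \<subseteq> monoms d E" using assms(1) by (simp add: polys_def)
  then show "Poly_Mapping.keys (mono_poly u * p) \<subseteq> monoms d E"
    using assms(3) by (auto simp: keys_mono_poly_mult intro: monoms_add)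
  show "u + ?l \<in> Poly_Mapping.keys (mono_poly u * p)"
    using lead_mon_greatest(1)[OF assms(1,2)] by (simp add: keys_mono_poly_mult)
  show "\<forall>n\<in>Poly_Mapping.keys (mono_poly u * p). n \<noteq> u + ?l \<longrightarrow> ord n (u + ?l)"
    using lead_mon_greatest[OF assms(1,2)] keys assms(3)
    by (auto simp: keys_mono_poly_mult intro!: ord_add_left)
qed

lemma mono_poly_in_init_ideal_iff:
  assumes "B \<subseteq> polys d E"
  shows "(mono_poly m :: 'a::field mpoly) \<in> init_ideal d E ord (ideal_gen d E B)
    \<longleftrightarrow> (\<exists>p\<in>ideal_gen d E B. p \<noteq> 0 \<and> lead_mon ord p = m)"
proof
  let ?I = "ideal_gen d E B"
  have leads: "{mono_poly (lead_mon ord p) | p. p \<in> ?I \<and> p \<noteq> 0} =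
      mono_poly ` {lead_mon ord p | p. p \<in> ?I \<and> p \<noteq> 0}"
    by blast
  assume "mono_poly m \<in> init_ideal d E ord ?I"
  then have "(mono_poly m :: 'a mpoly) \<in> ideal_gen d E (mono_poly ` {lead_mon ord p | p. p \<in> ?I \<and> p \<noteq> 0})"
    unfolding init_ideal_def leads .
  then obtain u p where u: "u \<in> monoms d E" and p: "p \<in> ?I" "p \<noteq> 0"
    and m: "m = u + lead_mon ord p"
    by (elim mono_poly_in_monomial_ideal) blast
  have "p \<in> polys d E" using p(1) ideal_gen_subset_polys[OF assms] by blast
  then have "lead_mon ord (mono_poly u * p) = m"
    using lead_mon_mono_poly_mult[OF _ p(2) u] m by simp
  moreover have "mono_poly u * p \<in> ?I" by (rule ideal_gen_mult[OF p(1) polys_mono_poly[OF u]])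
  moreover have "mono_poly u * p \<noteq> 0"
    using \<open>p \<noteq> 0\<close> by (simp add: keys_mono_poly_mult flip: keys_eq_empty)
  ultimately show "\<exists>p\<in>?I. p \<noteq> 0 \<and> lead_mon ord p = m" by blast
next
  assume "\<exists>p\<in>ideal_gen d E B. p \<noteq> 0 \<and> lead_mon ord p = m"
  then show "mono_poly m \<in> init_ideal d E ord (ideal_gen d E B)"
    unfolding init_ideal_def by (auto intro: ideal_gen_generator)
qed

end

section \<open>Colorings and their monomials\<close>

type_synonym coloring = "nat \<Rightarrow> nat option"

abbreviation color_class :: "coloring \<Rightarrow> nat \<Rightarrow> nat set" where
  "color_class h l \<equiv> {v. h v = Some l}"

lemma coloring_value:
  assumes "h \<in> colorings k E W" "x \<in> W"
  obtains l where "l \<in> {1..k}" "h x = Some l"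
  using assms unfolding colorings_def dom_def ran_def by blast

lemma two_coloring_value:
  assumes "h \<in> colorings 2 E W" "x \<in> W"
  shows "h x = Some 1 \<or> h x = Some 2"
  by (rule coloring_value[OF assms]) auto

lemma coloring_proper: "h \<in> colorings k E W \<Longrightarrow> u \<in> W \<Longrightarrow> v \<in> W \<Longrightarrow> E u v \<Longrightarrow> h u \<noteq> h v"
  unfolding colorings_def by blast

lemma color_class_subset: "h \<in> colorings k E W \<Longrightarrow> color_class h l \<subseteq> W"
  unfolding colorings_def by auto

lemma color_class_stable:
  assumes "h \<in> colorings k E W" "W \<subseteq> {1..d}"
  shows "color_class h l \<in> stable_sets d E"
  using assms color_class_subset[OF assms(1)] coloring_proper[OF assms(1)]
  unfolding stable_sets_def by fastforce

lemma xmon_monoms: "h \<in> colorings k E W \<Longrightarrow> W \<subseteq> {1..d} \<Longrightarrow> xmon k h \<in> monoms d E"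
  unfolding xmon_def by (intro monoms_sum monoms_single color_class_stable)

lemma mdeg_add: "mdeg (a + b) = mdeg a + mdeg b"
  unfolding mdeg_def by (rule setsum_keys_plus_distrib) auto

lemma mdeg_zero [simp]: "mdeg 0 = 0"
  by (simp add: mdeg_def)

lemma mdeg_sum: "mdeg (sum f I) = (\<Sum>i\<in>I. mdeg (f i))"
  by (induction I rule: infinite_finite_induct) (auto simp: mdeg_add)

lemma mdeg_single: "mdeg (Poly_Mapping.single S 1) = 1"
  by (simp add: mdeg_def)

lemma mdeg_xmon: "mdeg (xmon k h) = k"
  unfolding xmon_def mdeg_sum mdeg_single by simp

lemma xmon_two: "xmon 2 a = Poly_Mapping.single (color_class a 1) 1 + Poly_Mapping.single (color_class a 2) 1"
proof -
  have "{1..2::nat} = {1, 2}" by auto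
  then show ?thesis unfolding xmon_def by simp
qed

definition other_classes :: "nat \<Rightarrow> coloring \<Rightarrow> nat \<Rightarrow> nat \<Rightarrow> monom" where
  "other_classes k h i j = (\<Sum>l\<in>{1..k} - {i} - {j}. Poly_Mapping.single (color_class h l) 1)"

definition pair_restriction :: "nat \<Rightarrow> nat \<Rightarrow> coloring \<Rightarrow> coloring" where
  "pair_restriction i j h x = (if h x = Some i then Some 1 else if h x = Some j then Some 2 else None)"

lemma pair_restriction_colorings:
  assumes "h \<in> colorings k E W" "i \<noteq> j"
  shows "pair_restriction i j h \<in> colorings 2 E (color_class h i \<union> color_class h j)"
proof -
  have "dom (pair_restriction i j h) = color_class h i \<union> color_class h j"
    unfolding pair_restriction_def dom_def by auto
  moreover have "ran (pair_restriction i j h) \<subseteq> {1..2}"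
    unfolding pair_restriction_def ran_def by auto
  moreover have "pair_restriction i j h u \<noteq> pair_restriction i j h v"
    if "u \<in> color_class h i \<union> color_class h j" "v \<in> color_class h i \<union> color_class h j" "E u v" for u v
  proof -
    have "u \<in> W" "v \<in> W" using that(1,2) color_class_subset[OF assms(1)] by blast+
    then show ?thesis using coloring_proper[OF assms(1) _ _ that(3)] that(1,2) assms(2)
      unfolding pair_restriction_def by auto
  qed
  ultimately show ?thesis unfolding colorings_def by blast
qed

lemma xmon_eq_other_classes_add:
  assumes "i \<in> {1..k}" "j \<in> {1..k}" "i \<noteq> j"
  shows "xmon k h = other_classes k h i j + xmon 2 (pair_restriction i j h)"
proof -
  have "xmon k h = Poly_Mapping.single (color_class h i) 1 +
      (Poly_Mapping.single (color_class h j) 1 + other_classes k h i j)"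
    unfolding xmon_def other_classes_def using assms by (intro sum_remove_two) auto
  moreover have "color_class (pair_restriction i j h) 1 = color_class h i"
    "color_class (pair_restriction i j h) 2 = color_class h j"
    using assms(3) unfolding pair_restriction_def by auto
  ultimately show ?thesis by (simp add: xmon_two ac_simps)
qed

lemma sum_singles_remove:
  assumes "finite L" "(\<Sum>l\<in>L. Poly_Mapping.single (c l) (1::nat)) = Poly_Mapping.single A 1 + u"
  obtains i where "i \<in> L" "c i = A" "(\<Sum>l\<in>L - {i}. Poly_Mapping.single (c l) 1) = u"
proof -
  have "(\<Sum>l\<in>L. Poly_Mapping.lookup (Poly_Mapping.single (c l) (1::nat)) A) \<noteq> 0"
    using arg_cong[OF assms(2), of "\<lambda>m. Poly_Mapping.lookup m A"] by (simp add: lookup_sum lookup_add)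
  then obtain i where "i \<in> L" "Poly_Mapping.lookup (Poly_Mapping.single (c i) (1::nat)) A \<noteq> 0"
    by (meson sum.not_neutral_contains_not_neutral)
  then have i: "i \<in> L" "c i = A" by (auto simp: lookup_single when_def split: if_splits)
  moreover have "(\<Sum>l\<in>L. Poly_Mapping.single (c l) (1::nat)) =
      Poly_Mapping.single (c i) 1 + (\<Sum>l\<in>L - {i}. Poly_Mapping.single (c l) 1)"
    using assms(1) i(1) by (rule sum.remove)
  ultimately show ?thesis using that assms(2) by simp
qed

lemma xmon_eq_add_two_singles:
  assumes "xmon k h = u + (Poly_Mapping.single A 1 + Poly_Mapping.single B 1)"
  obtains i j where "i \<in> {1..k}" "j \<in> {1..k}" "i \<noteq> j"
    "color_class h i = A" "color_class h j = B" "u = other_classes k h i j"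
proof -
  from assms have "(\<Sum>l\<in>{1..k}. Poly_Mapping.single (color_class h l) 1) =
      Poly_Mapping.single A 1 + (Poly_Mapping.single B 1 + u)"
    unfolding xmon_def by (simp only: ac_simps)
  then obtain i where i: "i \<in> {1..k}" "color_class h i = A"
    "(\<Sum>l\<in>{1..k} - {i}. Poly_Mapping.single (color_class h l) 1) = Poly_Mapping.single B 1 + u"
    by (rule sum_singles_remove[OF finite_atLeastAtMost])
  from i(3) obtain j where "j \<in> {1..k} - {i}" "color_class h j = B"
    "(\<Sum>l\<in>{1..k} - {i} - {j}. Poly_Mapping.single (color_class h l) 1) = u"
    by (rule sum_singles_remove[OF finite_Diff[OF finite_atLeastAtMost]])
  with i that show ?thesis unfolding other_classes_def by blast
qed

section \<open>Kempe changes\<close>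

lemma component_subset: "component_of E A v \<subseteq> A"
  unfolding component_of_def by auto

lemma component_closed: "x \<in> component_of E A v \<Longrightarrow> y \<in> A \<Longrightarrow> E x y \<Longrightarrow> y \<in> component_of E A v"
  unfolding component_of_def by (auto intro: rtranclp.rtrancl_into_rtrancl)

lemma component_self: "v \<in> A \<Longrightarrow> v \<in> component_of E A v"
  unfolding component_of_def by auto

lemma component_invariant:
  assumes "x \<in> component_of E A v"
    and "\<And>y z. y \<in> A \<Longrightarrow> z \<in> A \<Longrightarrow> E y z \<Longrightarrow> P y = P z"
  shows "P x = P v"
proof -
  have "(\<lambda>x y. x \<in> A \<and> y \<in> A \<and> E x y)\<^sup>*\<^sup>* v x"
    using assms(1) unfolding component_of_def by blast
  then show ?thesis by (induction rule: rtranclp_induct) (auto dest: assms(2))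
qed

definition kempe_flip :: "(nat \<Rightarrow> nat \<Rightarrow> bool) \<Rightarrow> nat set \<Rightarrow> nat \<Rightarrow> nat \<Rightarrow> nat \<Rightarrow> coloring \<Rightarrow> coloring"
  where "kempe_flip E W i j v g = (\<lambda>x.
    if x \<in> component_of E {y \<in> W. g y = Some i \<or> g y = Some j} v
    then (if g x = Some i then Some j else Some i) else g x)"

lemma kempe_switch_iff:
  "kempe_switch k E W f g \<longleftrightarrow> f \<in> colorings k E W \<and>
    (\<exists>i j v. 1 \<le> i \<and> i < j \<and> j \<le> k \<and> v \<in> W \<and> (f v = Some i \<or> f v = Some j) \<and>
       g = kempe_flip E W i j v f)"
  unfolding kempe_switch_def kempe_flip_def Let_def by blast

lemma kempe_flip_swap: "i \<noteq> j \<Longrightarrow> kempe_flip E W j i v g = kempe_flip E W i j v g"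
proof -
  assume "i \<noteq> j"
  let ?A = "{y \<in> W. g y = Some i \<or> g y = Some j}"
  have "{y \<in> W. g y = Some j \<or> g y = Some i} = ?A" by auto
  then show ?thesis
    using component_subset[of E ?A v] \<open>i \<noteq> j\<close> unfolding kempe_flip_def by (auto intro!: ext)
qed

lemma kempe_switch_kempe_flip:
  assumes "g \<in> colorings k E W" "i \<in> {1..k}" "j \<in> {1..k}" "i \<noteq> j"
    and "v \<in> W" "g v = Some i \<or> g v = Some j"
  shows "kempe_switch k E W g (kempe_flip E W i j v g)"
proof (cases "i < j")
  case True
  then show ?thesis using assms unfolding kempe_switch_iff by auto
next
  case False
  then show ?thesis
    using assms kempe_flip_swap[OF assms(4), of E W v g] unfolding kempe_switch_iff
    by (intro conjI exI[of _ j] exI[of _ i] exI[of _ v]) auto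
qed

lemma color_class_kempe_flip_other:
  assumes "l \<noteq> i" "l \<noteq> j"
  shows "color_class (kempe_flip E W i j v g) l = color_class g l"
  using assms component_subset[of E "{y \<in> W. g y = Some i \<or> g y = Some j}" v]
  unfolding kempe_flip_def by (auto split: if_splits)

lemma color_class_kempe_flip_pair:
  "color_class (kempe_flip E W i j v g) i \<union> color_class (kempe_flip E W i j v g) j =
    color_class g i \<union> color_class g j"
  using component_subset[of E "{y \<in> W. g y = Some i \<or> g y = Some j}" v]
  unfolding kempe_flip_def by (auto split: if_splits)

lemma kempe_flip_colorings:
  assumes sym: "\<forall>u v. E u v \<longrightarrow> E v u"
    and g: "g \<in> colorings k E W" and ij: "i \<in> {1..k}" "j \<in> {1..k}" "i \<noteq> j"
  shows "kempe_flip E W i j v g \<in> colorings k E W"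
proof -
  let ?A = "{y \<in> W. g y = Some i \<or> g y = Some j}"
  let ?C = "component_of E ?A v"
  let ?h = "kempe_flip E W i j v g"
  have CA: "?C \<subseteq> ?A" by (rule component_subset)
  have inC: "g x = Some i \<or> g x = Some j" if "x \<in> ?C" for x using CA that by blast
  have "dom ?h = W"
    using g CA unfolding kempe_flip_def colorings_def dom_def by auto
  moreover have "ran ?h \<subseteq> {1..k}"
    using g CA ij unfolding kempe_flip_def colorings_def ran_def by (auto split: if_splits)
  moreover have "?h x \<noteq> ?h y" if xy: "x \<in> W" "y \<in> W" "E x y" for x y
  proof -
    have gxy: "g x \<noteq> g y" using coloring_proper[OF g xy] .
    have "y \<notin> ?A" if "x \<in> ?C" "y \<notin> ?C" using component_closed[of x E ?A v y] that xy by auto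
    moreover have "x \<notin> ?A" if "y \<in> ?C" "x \<notin> ?C"
      using component_closed[of y E ?A v x] that xy sym by auto
    ultimately show ?thesis
      using gxy inC[of x] inC[of y] xy ij(3) unfolding kempe_flip_def by (auto split: if_splits)
  qed
  ultimately show ?thesis unfolding colorings_def by blast
qed

lemma kempe_switch_colorings:
  "\<forall>u v. E u v \<longrightarrow> E v u \<Longrightarrow> kempe_switch k E W f g \<Longrightarrow> g \<in> colorings k E W"
  unfolding kempe_switch_iff by (auto intro: kempe_flip_colorings)

lemma K_ideal_pair_move:
  assumes "u \<in> monoms d E" "W' \<subseteq> {1..d}" "a \<in> colorings 2 E W'" "b \<in> colorings 2 E W'"
  shows "(mono_poly (u + xmon 2 a) - mono_poly (u + xmon 2 b) :: 'a::field mpoly) \<in> K_ideal d E"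
proof -
  have "(mono_poly (xmon 2 a) - mono_poly (xmon 2 b) :: 'a mpoly) \<in> J_gens d E"
    unfolding J_gens_def using assms(2-4) by blast
  then have "mono_poly u * (mono_poly (xmon 2 a) - mono_poly (xmon 2 b) :: 'a mpoly) \<in> K_ideal d E"
    unfolding K_ideal_def by (intro ideal_gen_mult ideal_gen_generator polys_mono_poly assms(1)) simp
  then show ?thesis by (simp add: right_diff_distrib mono_poly_mult)
qed

lemma xmon_diff_in_K_ideal:
  assumes h: "h \<in> colorings k E W" and h': "h' \<in> colorings k E W" and W: "W \<subseteq> {1..d}"
    and ij: "i \<in> {1..k}" "j \<in> {1..k}" "i \<noteq> j"
    and other: "\<And>l. l \<noteq> i \<Longrightarrow> l \<noteq> j \<Longrightarrow> color_class h' l = color_class h l"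
    and pair: "color_class h' i \<union> color_class h' j = color_class h i \<union> color_class h j"
  shows "(mono_poly (xmon k h) - mono_poly (xmon k h') :: 'a::field mpoly) \<in> K_ideal d E"
proof -
  let ?A = "color_class h i \<union> color_class h j"
  have "other_classes k h' i j = other_classes k h i j"
    unfolding other_classes_def using other by (intro sum.cong) auto
  then have "xmon k h' = other_classes k h i j + xmon 2 (pair_restriction i j h')"
    using xmon_eq_other_classes_add[OF ij] by simp
  moreover have "xmon k h = other_classes k h i j + xmon 2 (pair_restriction i j h)"
    using xmon_eq_other_classes_add[OF ij] .
  moreover have "other_classes k h i j \<in> monoms d E"
    unfolding other_classes_def by (intro monoms_sum monoms_single color_class_stable[OF h W])
  moreover have "?A \<subseteq> {1..d}" using color_class_subset[OF h] W by blast
  moreover have "pair_restriction i j h \<in> colorings 2 E ?A"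
    "pair_restriction i j h' \<in> colorings 2 E ?A"
    using pair_restriction_colorings[OF h ij(3)] pair_restriction_colorings[OF h' ij(3)] pair
    by simp_all
  ultimately show ?thesis using K_ideal_pair_move by metis
qed

lemma kempe_switch_xmon_diff:
  assumes sym: "\<forall>u v. E u v \<longrightarrow> E v u" and W: "W \<subseteq> {1..d}" and "kempe_switch k E W f g"
  shows "(mono_poly (xmon k f) - mono_poly (xmon k g) :: 'a::field mpoly) \<in> K_ideal d E"
proof -
  obtain i j v where f: "f \<in> colorings k E W" and "1 \<le> i" "i < j" "j \<le> k"
    and g: "g = kempe_flip E W i j v f"
    using assms(3) unfolding kempe_switch_iff by blast
  then have ij: "i \<in> {1..k}" "j \<in> {1..k}" "i \<noteq> j" by auto
  show ?thesis unfolding g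
    by (rule xmon_diff_in_K_ideal[OF f kempe_flip_colorings[OF sym f ij] W ij
          color_class_kempe_flip_other color_class_kempe_flip_pair])
qed

lemma color_permD:
  assumes "color_perm k E W f g"
  shows "g \<in> colorings k E W" and "xmon k g = xmon k f"
proof -
  obtain \<sigma> where f: "f \<in> colorings k E W" and \<sigma>: "bij_betw \<sigma> {1..k} {1..k}"
    and g: "g = map_option \<sigma> \<circ> f"
    using assms unfolding color_perm_def by blast
  have inj: "inj_on \<sigma> {1..k}" using \<sigma> by (rule bij_betw_imp_inj_on)
  have val: "f x = Some c \<Longrightarrow> c \<in> {1..k}" for x c using f unfolding colorings_def ran_def by blast
  have "g u \<noteq> g v" if uv: "u \<in> W" "v \<in> W" "E u v" for u v
  proof -
    obtain a c where "f u = Some a" "f v = Some c"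
      using f uv(1,2) unfolding colorings_def by blast
    then show ?thesis using coloring_proper[OF f uv] val inj unfolding g by (auto dest: inj_onD)
  qed
  moreover have "ran g \<subseteq> {1..k}"
    using val bij_betw_imp_surj_on[OF \<sigma>] unfolding g ran_def by auto
  ultimately show "g \<in> colorings k E W" using f unfolding colorings_def g dom_def by auto
  have classes: "color_class g (\<sigma> l) = color_class f l" if "l \<in> {1..k}" for l
    using val inj that unfolding g by (auto dest: inj_onD)
  have "xmon k g = (\<Sum>l\<in>{1..k}. Poly_Mapping.single (color_class g (\<sigma> l)) 1)"
    unfolding xmon_def by (rule sum.reindex_bij_betw[OF \<sigma>, symmetric])
  also have "\<dots> = xmon k f" unfolding xmon_def by (rule sum.cong) (simp_all add: classes)
  finally show "xmon k g = xmon k f" .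
qed

lemma kempe_equiv_refl: "kempe_equiv k E W f f"
  unfolding kempe_equiv_def by simp

lemma kempe_equiv_sym: "kempe_equiv k E W f g \<Longrightarrow> kempe_equiv k E W g f"
  unfolding kempe_equiv_def by (rule sympD[OF symp_rtranclp]) (auto intro: sympI)

lemma kempe_equiv_trans: "kempe_equiv k E W f g \<Longrightarrow> kempe_equiv k E W g h \<Longrightarrow> kempe_equiv k E W f h"
  unfolding kempe_equiv_def by (rule rtranclp_trans)

lemma kempe_equiv_colorings:
  assumes sym: "\<forall>u v. E u v \<longrightarrow> E v u"
    and "kempe_equiv k E W f g" "f \<in> colorings k E W"
  shows "g \<in> colorings k E W"
  using assms(2) unfolding kempe_equiv_def
proof (induction rule: rtranclp_induct)
  case (step y z)
  from step.hyps(2) show ?case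
  proof (elim disjE)
    assume "kempe_switch k E W y z"
    then show ?thesis by (rule kempe_switch_colorings[OF sym])
  next
    assume "color_perm k E W y z"
    then show ?thesis by (rule color_permD(1))
  qed (simp_all add: kempe_switch_def color_perm_def)
qed (rule assms(3))

lemma kempe_equiv_xmon_diff:
  assumes sym: "\<forall>u v. E u v \<longrightarrow> E v u" and W: "W \<subseteq> {1..d}"
    and "kempe_equiv k E W f g" "f \<in> colorings k E W"
  shows "(mono_poly (xmon k f) - mono_poly (xmon k g) :: 'a::field mpoly) \<in> K_ideal d E"
  using assms(3) unfolding kempe_equiv_def
proof (induction rule: rtranclp_induct)
  case base
  then show ?case by (simp add: K_ideal_def ideal_gen_zero)
next
  case (step y z)
  have yz: "(mono_poly (xmon k y) - mono_poly (xmon k z) :: 'a mpoly) \<in> K_ideal d E"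
    using step.hyps(2)
  proof (elim disjE)
    assume "kempe_switch k E W z y"
    from kempe_switch_xmon_diff[OF sym W this]
    have "0 - (mono_poly (xmon k z) - mono_poly (xmon k y) :: 'a mpoly) \<in> K_ideal d E"
      unfolding K_ideal_def by (rule ideal_gen_diff[OF ideal_gen_zero])
    then show ?thesis by simp
  next
    assume "kempe_switch k E W y z"
    then show ?thesis by (rule kempe_switch_xmon_diff[OF sym W])
  next
    assume "color_perm k E W y z"
    then have "xmon k z = xmon k y" by (rule color_permD(2))
    then show ?thesis by (simp add: K_ideal_def ideal_gen_zero)
  next
    assume "color_perm k E W z y"
    then have "xmon k y = xmon k z" by (rule color_permD(2))
    then show ?thesis by (simp add: K_ideal_def ideal_gen_zero)
  qed
  have "(mono_poly (xmon k f) - mono_poly (xmon k y)) + (mono_poly (xmon k y) - mono_poly (xmon k z))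
      \<in> (K_ideal d E :: 'a mpoly set)"
    using step.IH yz unfolding K_ideal_def by (rule ideal_gen_add)
  then show ?case by simp
qed

definition mismatch :: "nat \<Rightarrow> coloring \<Rightarrow> coloring \<Rightarrow> nat set" where
  "mismatch i b g = {x \<in> dom b. (g x = Some i) \<noteq> (b x = Some 1)}"

definition pair_recoloring :: "nat \<Rightarrow> nat \<Rightarrow> coloring \<Rightarrow> coloring \<Rightarrow> coloring" where
  "pair_recoloring i j b g x = (if x \<in> dom b then (if b x = Some 1 then Some i else Some j) else g x)"

lemma pair_recoloring_classes:
  assumes b: "b \<in> colorings 2 E A" and ij: "i \<noteq> j" and A: "color_class g i \<union> color_class g j = A"
  shows "pair_restriction i j (pair_recoloring i j b g) = b"
    and "\<And>l. l \<noteq> i \<Longrightarrow> l \<noteq> j \<Longrightarrow> color_class (pair_recoloring i j b g) l = color_class g l"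
proof -
  have domb: "\<forall>x. x \<in> dom b \<longleftrightarrow> g x = Some i \<or> g x = Some j"
    using b A unfolding colorings_def by auto
  show "pair_restriction i j (pair_recoloring i j b g) = b"
  proof
    fix x show "pair_restriction i j (pair_recoloring i j b g) x = b x"
      using domb two_coloring_value[OF b, of x] ij b
      unfolding pair_restriction_def pair_recoloring_def colorings_def by auto
  qed
  show "color_class (pair_recoloring i j b g) l = color_class g l" if "l \<noteq> i" "l \<noteq> j" for l
    using domb that unfolding pair_recoloring_def by auto
qed

lemma pair_recoloring_kempe_flip:
  assumes "color_class g i \<union> color_class g j = dom b"
  shows "pair_recoloring i j b (kempe_flip E W i j v g) = pair_recoloring i j b g"
proof -
  have "\<forall>x. x \<in> dom b \<longleftrightarrow> g x = Some i \<or> g x = Some j" using assms by auto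
  then show ?thesis
    using component_subset[of E "{y \<in> W. g y = Some i \<or> g y = Some j}" v]
    unfolding pair_recoloring_def kempe_flip_def by (auto intro!: ext)
qed

text \<open>Along an edge inside the two colour classes both \<open>g\<close> and \<open>b\<close> change colour, so a
  Kempe component meeting the mismatch set lies inside it.\<close>
lemma mismatch_kempe_flip:
  assumes g: "g \<in> colorings k E W" and ij: "i \<noteq> j" and b: "b \<in> colorings 2 E A"
    and A: "color_class g i \<union> color_class g j = A" and v: "v \<in> mismatch i b g"
  shows "mismatch i b (kempe_flip E W i j v g) = mismatch i b g - component_of E A v"
    and "v \<in> component_of E A v"
proof -
  have domb: "dom b = A" using b unfolding colorings_def by simp
  have AW: "{y \<in> W. g y = Some i \<or> g y = Some j} = A"
    using A color_class_subset[OF g] by auto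
  have flip: "kempe_flip E W i j v g = (\<lambda>x. if x \<in> component_of E A v
      then (if g x = Some i then Some j else Some i) else g x)"
    unfolding kempe_flip_def AW ..
  have CA: "component_of E A v \<subseteq> A" by (rule component_subset)
  have inv: "x \<in> mismatch i b g" if "x \<in> component_of E A v" for x
  proof -
    have "((g x = Some i) \<noteq> (b x = Some 1)) = ((g v = Some i) \<noteq> (b v = Some 1))"
    proof (rule component_invariant[OF that])
      fix y z assume yz: "y \<in> A" "z \<in> A" "E y z"
      then have "y \<in> W" "z \<in> W" using A color_class_subset[OF g] by auto
      then have "g y \<noteq> g z" "b y \<noteq> b z"
        using coloring_proper[OF g _ _ yz(3)] coloring_proper[OF b yz] by auto
      then show "((g y = Some i) \<noteq> (b y = Some 1)) = ((g z = Some i) \<noteq> (b z = Some 1))"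
        using yz(1,2) A two_coloring_value[OF b yz(1)] two_coloring_value[OF b yz(2)] by auto
    qed
    then show ?thesis using v that CA domb unfolding mismatch_def by auto
  qed
  show "mismatch i b (kempe_flip E W i j v g) = mismatch i b g - component_of E A v"
    using inv CA A ij unfolding flip mismatch_def domb by auto
  show "v \<in> component_of E A v" using v domb by (auto simp: mismatch_def intro: component_self)
qed

lemma kempe_equiv_pair_recoloring:
  assumes sym: "\<forall>u v. E u v \<longrightarrow> E v u" and "finite W"
    and ij: "i \<in> {1..k}" "j \<in> {1..k}" "i \<noteq> j" and b: "b \<in> colorings 2 E A"
  shows "g \<in> colorings k E W \<Longrightarrow> color_class g i \<union> color_class g j = A \<Longrightarrow>
    kempe_equiv k E W g (pair_recoloring i j b g)"
proof (induction "card (mismatch i b g)" arbitrary: g rule: less_induct)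
  case less
  have domb: "dom b = A" using b unfolding colorings_def by simp
  show ?case
  proof (cases "mismatch i b g = {}")
    case True
    then have "pair_recoloring i j b g = g"
      using less.prems(2) two_coloring_value[OF b] domb ij(3)
      unfolding pair_recoloring_def mismatch_def by (auto intro!: ext)
    then show ?thesis by (simp add: kempe_equiv_refl)
  next
    case False
    then obtain v where v: "v \<in> mismatch i b g" by blast
    let ?g' = "kempe_flip E W i j v g"
    note shrink = mismatch_kempe_flip[OF less.prems(1) ij(3) b less.prems(2) v]
    have vW: "v \<in> W" "g v = Some i \<or> g v = Some j"
      using v less.prems(2) color_class_subset[OF less.prems(1)] domb
      unfolding mismatch_def by auto
    have "finite (mismatch i b g)"
      using \<open>finite W\<close> less.prems color_class_subset[OF less.prems(1)] domb
      by (auto simp: mismatch_def intro: finite_subset)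
    then have "card (mismatch i b ?g') < card (mismatch i b g)"
      unfolding shrink(1) using v shrink(2) by (intro psubset_card_mono) auto
    moreover have "?g' \<in> colorings k E W" by (rule kempe_flip_colorings[OF sym less.prems(1) ij])
    moreover have "color_class ?g' i \<union> color_class ?g' j = A"
      using color_class_kempe_flip_pair less.prems(2) by simp
    ultimately have "kempe_equiv k E W ?g' (pair_recoloring i j b ?g')" by (rule less.hyps)
    moreover have "pair_recoloring i j b ?g' = pair_recoloring i j b g"
      using pair_recoloring_kempe_flip less.prems(2) domb by simp
    moreover have "kempe_equiv k E W g ?g'"
      using kempe_switch_kempe_flip[OF less.prems(1) ij vW] unfolding kempe_equiv_def by blast
    ultimately show ?thesis using kempe_equiv_trans by metis
  qed
qed

section \<open>Kempe classes of monomials\<close>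

definition kempe_class :: "nat \<Rightarrow> (nat \<Rightarrow> nat \<Rightarrow> bool) \<Rightarrow> nat set \<Rightarrow> coloring \<Rightarrow> monom set" where
  "kempe_class k E W f = {xmon k g | g. g \<in> colorings k E W \<and> kempe_equiv k E W g f}"

lemma mem_kempe_class_iff:
  "m \<in> kempe_class k E W f \<longleftrightarrow> (\<exists>g\<in>colorings k E W. m = xmon k g \<and> kempe_equiv k E W g f)"
  unfolding kempe_class_def by blast

lemma kempe_class_monoms: "W \<subseteq> {1..d} \<Longrightarrow> kempe_class k E W f \<subseteq> monoms d E"
  unfolding kempe_class_def by (blast intro: xmon_monoms)

lemma kempe_class_pair_move:
  assumes sym: "\<forall>u v. E u v \<longrightarrow> E v u" and "finite W"
    and a: "a \<in> colorings 2 E W'" and b: "b \<in> colorings 2 E W'"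
    and m: "u + xmon 2 a \<in> kempe_class k E W f"
  shows "u + xmon 2 b \<in> kempe_class k E W f"
proof -
  obtain g where g: "g \<in> colorings k E W" "kempe_equiv k E W g f" "u + xmon 2 a = xmon k g"
    using m unfolding mem_kempe_class_iff by blast
  from g(3)[symmetric, unfolded xmon_two] obtain i j
    where ij: "i \<in> {1..k}" "j \<in> {1..k}" "i \<noteq> j"
    and cls: "color_class g i = color_class a 1" "color_class g j = color_class a 2"
    and u: "u = other_classes k g i j"
    by (rule xmon_eq_add_two_singles)
  have A: "color_class g i \<union> color_class g j = W'"
    using cls two_coloring_value[OF a] a unfolding colorings_def by auto
  let ?g' = "pair_recoloring i j b g"
  have ke: "kempe_equiv k E W g ?g'"
    by (rule kempe_equiv_pair_recoloring[OF sym \<open>finite W\<close> ij b g(1) A])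
  note cls' = pair_recoloring_classes[OF b ij(3) A]
  have "other_classes k ?g' i j = u"
    unfolding u other_classes_def using cls'(2) by (intro sum.cong) auto
  then have "u + xmon 2 b = xmon k ?g'"
    using xmon_eq_other_classes_add[OF ij, of ?g'] cls'(1) by simp
  moreover have "?g' \<in> colorings k E W" by (rule kempe_equiv_colorings[OF sym ke g(1)])
  moreover have "kempe_equiv k E W ?g' f" using kempe_equiv_sym[OF ke] g(2) by (rule kempe_equiv_trans)
  ultimately show ?thesis unfolding mem_kempe_class_iff by blast
qed

lemma kempe_class_no_overlap:
  assumes "S \<inter> T \<noteq> {}"
  shows "u + (Poly_Mapping.single S 1 + Poly_Mapping.single T 1) \<notin> kempe_class k E W f"
proof
  assume "u + (Poly_Mapping.single S 1 + Poly_Mapping.single T 1) \<in> kempe_class k E W f"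
  then obtain g where "xmon k g = u + (Poly_Mapping.single S 1 + Poly_Mapping.single T 1)"
    unfolding kempe_class_def by auto
  then obtain i j where "i \<noteq> j" "color_class g i = S" "color_class g j = T"
    by (rule xmon_eq_add_two_singles)
  then show False using assms by auto
qed

definition coeff_sum :: "monom set \<Rightarrow> 'a::field mpoly \<Rightarrow> 'a" where
  "coeff_sum C p = (\<Sum>m\<in>Poly_Mapping.keys p. if m \<in> C then Poly_Mapping.lookup p m else 0)"

lemma coeff_sum_add: "coeff_sum C (p + q) = coeff_sum C p + coeff_sum C q"
  unfolding coeff_sum_def by (rule setsum_keys_plus_distrib) auto

lemma coeff_sum_diff: "coeff_sum C (p - q) = coeff_sum C p - coeff_sum C q"
  using coeff_sum_add[of C "p - q" q] by simp

lemma coeff_sum_zero [simp]: "coeff_sum C 0 = 0"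
  by (simp add: coeff_sum_def)

lemma coeff_sum_sum: "coeff_sum C (sum f I) = (\<Sum>i\<in>I. coeff_sum C (f i))"
  by (induction I rule: infinite_finite_induct) (auto simp: coeff_sum_add)

lemma coeff_sum_single: "coeff_sum C (Poly_Mapping.single m c) = (if m \<in> C then c else 0)"
  by (simp add: coeff_sum_def)

lemma coeff_sum_eq_lookup:
  assumes "s \<in> C" "\<And>m. m \<in> Poly_Mapping.keys p \<Longrightarrow> m \<in> C \<Longrightarrow> m = s"
  shows "coeff_sum C p = Poly_Mapping.lookup p s"
proof -
  have "coeff_sum C p = (\<Sum>m\<in>Poly_Mapping.keys p. if m = s then Poly_Mapping.lookup p s else 0)"
    unfolding coeff_sum_def
  proof (rule sum.cong[OF refl])
    fix m assume "m \<in> Poly_Mapping.keys p"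
    then have "m \<in> C \<longleftrightarrow> m = s" using assms by blast
    then show "(if m \<in> C then Poly_Mapping.lookup p m else 0) = (if m = s then Poly_Mapping.lookup p s else 0)"
      by simp
  qed
  then show ?thesis by (simp add: in_keys_iff)
qed

lemma coeff_sum_ideal_gen:
  assumes "\<And>g u c. g \<in> B \<Longrightarrow> coeff_sum C (Poly_Mapping.single u c * g) = 0"
    and "p \<in> ideal_gen d E B"
  shows "coeff_sum C p = 0"
proof -
  obtain n :: nat and q g where h: "\<forall>i<n. q i \<in> polys d E \<and> g i \<in> B" "p = (\<Sum>i<n. q i * g i)"
    using assms(2) by (rule ideal_genE)
  have "coeff_sum C (q i * g i) = 0" if "i < n" for i
  proof -
    have "q i * g i = (\<Sum>u\<in>Poly_Mapping.keys (q i). Poly_Mapping.single u (Poly_Mapping.lookup (q i) u) * g i)"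
      by (subst poly_mapping_expand[of "q i"]) (simp add: sum_distrib_right)
    then show ?thesis using h(1) that by (simp add: coeff_sum_sum assms(1))
  qed
  then show ?thesis unfolding h(2) by (simp add: coeff_sum_sum)
qed

lemma coeff_sum_kempe_class_K_ideal:
  assumes sym: "\<forall>u v. E u v \<longrightarrow> E v u" and "finite W" and p: "p \<in> K_ideal d E"
  shows "coeff_sum (kempe_class k E W f) p = 0"
  using _ p[unfolded K_ideal_def]
proof (rule coeff_sum_ideal_gen)
  let ?C = "kempe_class k E W f"
  fix g u c assume "g \<in> J_gens d E \<union> M_gens d E"
  then show "coeff_sum ?C (Poly_Mapping.single u c * g) = 0"
  proof
    assume "g \<in> J_gens d E"
    then obtain W' a b where a: "a \<in> colorings 2 E W'" and b: "b \<in> colorings 2 E W'"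
      and g: "g = mono_poly (xmon 2 a) - mono_poly (xmon 2 b)"
      unfolding J_gens_def by blast
    have "u + xmon 2 a \<in> ?C \<longleftrightarrow> u + xmon 2 b \<in> ?C"
      using kempe_class_pair_move[OF sym \<open>finite W\<close> a b] kempe_class_pair_move[OF sym \<open>finite W\<close> b a]
      by blast
    then show ?thesis
      unfolding g mono_poly_def by (simp add: right_diff_distrib mult_single coeff_sum_diff coeff_sum_single)
  next
    assume "g \<in> M_gens d E"
    then obtain S T where "S \<inter> T \<noteq> {}"
      and g: "g = mono_poly (Poly_Mapping.single S 1 + Poly_Mapping.single T 1)"
      unfolding M_gens_def by blast
    then show ?thesis
      using kempe_class_no_overlap unfolding g mono_poly_def by (simp add: mult_single coeff_sum_single)
  qed
qed

section \<open>Standard monomials\<close>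

lemma K_generators_polys: "J_gens d E \<union> M_gens d E \<subseteq> (polys d E :: 'a::field mpoly set)"
proof
  fix g :: "'a mpoly" assume "g \<in> J_gens d E \<union> M_gens d E"
  then show "g \<in> polys d E"
  proof
    assume "g \<in> J_gens d E"
    then obtain W' a b where ab: "W' \<subseteq> {1..d}" "a \<in> colorings 2 E W'" "b \<in> colorings 2 E W'"
      and g: "g = mono_poly (xmon 2 a) - mono_poly (xmon 2 b)"
      unfolding J_gens_def by blast
    show ?thesis unfolding g by (intro polys_diff polys_mono_poly xmon_monoms[OF _ ab(1)] ab(2,3))
  next
    assume "g \<in> M_gens d E"
    then obtain S T where ST: "S \<in> stable_sets d E" "T \<in> stable_sets d E"
      and g: "g = mono_poly (Poly_Mapping.single S 1 + Poly_Mapping.single T 1)"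
      unfolding M_gens_def by blast
    show ?thesis unfolding g by (intro polys_mono_poly monoms_add monoms_single ST)
  qed
qed

lemma K_ideal_subset_polys: "K_ideal d E \<subseteq> (polys d E :: 'a::field mpoly set)"
  unfolding K_ideal_def by (rule ideal_gen_subset_polys[OF K_generators_polys])

lemma std_monoms_iff:
  assumes mo: "monomial_order d E ord"
  shows "m \<in> std_monoms TYPE('a::field) d E ord k \<longleftrightarrow> m \<in> monoms d E \<and> mdeg m = k \<and>
    \<not> (\<exists>p\<in>(K_ideal d E :: 'a mpoly set). p \<noteq> 0 \<and> lead_mon ord p = m)"
  unfolding std_monoms_def K_ideal_def
  using mono_poly_in_init_ideal_iff[OF mo K_generators_polys] by blast

lemma std_monom_no_overlap:
  assumes mo: "monomial_order d E ord" and m: "m \<in> std_monoms TYPE('a::field) d E ord k"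
    and eq: "m = u + (Poly_Mapping.single S 1 + Poly_Mapping.single T 1)"
  shows "S \<inter> T = {}"
proof (rule ccontr)
  assume ST: "S \<inter> T \<noteq> {}"
  have mm: "m \<in> monoms d E" using m by (simp add: std_monoms_def)
  then have "S \<in> stable_sets d E" "T \<in> stable_sets d E"
    unfolding eq monoms_def by (auto simp: in_keys_iff lookup_add lookup_single)
  with ST have "(mono_poly (Poly_Mapping.single S 1 + Poly_Mapping.single T 1) :: 'a mpoly) \<in> K_ideal d E"
    unfolding K_ideal_def M_gens_def by (intro ideal_gen_generator) blast
  moreover have "u \<in> monoms d E" using mm unfolding eq by (rule monoms_add_left)
  ultimately have "mono_poly u * mono_poly (Poly_Mapping.single S 1 + Poly_Mapping.single T 1)
      \<in> (K_ideal d E :: 'a mpoly set)"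
    unfolding K_ideal_def by (intro ideal_gen_mult polys_mono_poly)
  then have "(mono_poly m :: 'a mpoly) \<in> K_ideal d E" unfolding eq mono_poly_mult .
  then show False using m lead_mon_mono_poly unfolding std_monoms_iff[OF mo] by fastforce
qed

text \<open>An \<open>ord\<close>-minimal monomial of a Kempe class is standard: otherwise it is the leading
  monomial of some \<open>p \<in> K_G\<close>, and since the coefficients of \<open>p\<close> over the class sum to zero,
  \<open>p\<close> has a smaller monomial in the same class.\<close>
lemma kempe_class_has_std_monom:
  assumes sym: "\<forall>u v. E u v \<longrightarrow> E v u" and W: "W \<subseteq> {1..d}" and mo: "monomial_order d E ord"
    and f: "f \<in> colorings k E W"
  obtains s where "s \<in> kempe_class k E W f" "s \<in> std_monoms TYPE('a::field) d E ord k"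
proof -
  let ?C = "kempe_class k E W f"
  have "finite W" using W finite_subset by blast
  have C: "?C \<subseteq> monoms d E" by (rule kempe_class_monoms[OF W])
  have "xmon k f \<in> ?C" using f kempe_equiv_refl unfolding mem_kempe_class_iff by blast
  then obtain s where s: "s \<in> ?C" and min: "\<And>m. m \<in> ?C \<Longrightarrow> \<not> ord m s"
    using wfp_eq_minimal[THEN iffD1, OF wfP_ord[OF mo]] C by (metis subsetD)
  have "\<not> (\<exists>p\<in>(K_ideal d E :: 'a mpoly set). p \<noteq> 0 \<and> lead_mon ord p = s)"
  proof
    assume "\<exists>p\<in>(K_ideal d E :: 'a mpoly set). p \<noteq> 0 \<and> lead_mon ord p = s"
    then obtain p :: "'a mpoly" where p: "p \<in> K_ideal d E" "p \<noteq> 0" "lead_mon ord p = s" by blast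
    have "p \<in> polys d E" using p(1) K_ideal_subset_polys by blast
    note lead = lead_mon_greatest[OF mo this p(2), unfolded p(3)]
    have "\<exists>m\<in>Poly_Mapping.keys p. m \<in> ?C \<and> m \<noteq> s"
    proof (rule ccontr)
      assume "\<not> ?thesis"
      then have "coeff_sum ?C p = Poly_Mapping.lookup p s"
        using s by (intro coeff_sum_eq_lookup) auto
      then show False
        using coeff_sum_kempe_class_K_ideal[OF sym \<open>finite W\<close> p(1)] lead(1) by (simp add: in_keys_iff)
    qed
    then show False using lead(2) min by blast
  qed
  moreover have "mdeg s = k" using s unfolding mem_kempe_class_iff by (auto simp: mdeg_xmon)
  ultimately show ?thesis using that s C unfolding std_monoms_iff[OF mo] by blast
qed

lemma std_monom_kempe_class_unique:
  assumes sym: "\<forall>u v. E u v \<longrightarrow> E v u" and W: "W \<subseteq> {1..d}" and mo: "monomial_order d E ord"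
    and m1: "m1 \<in> std_monoms TYPE('a::field) d E ord k" "m1 \<in> kempe_class k E W f"
    and m2: "m2 \<in> std_monoms TYPE('a) d E ord k" "m2 \<in> kempe_class k E W f"
  shows "m1 = m2"
proof (rule ccontr)
  assume ne: "m1 \<noteq> m2"
  obtain g1 g2 where g1: "g1 \<in> colorings k E W" "m1 = xmon k g1" "kempe_equiv k E W g1 f"
    and g2: "m2 = xmon k g2" "kempe_equiv k E W g2 f"
    using m1(2) m2(2) unfolding mem_kempe_class_iff by blast
  let ?p = "mono_poly m1 - mono_poly m2 :: 'a mpoly"
  have "?p \<in> K_ideal d E"
    unfolding g1(2) g2(1)
    using kempe_equiv_trans[OF g1(3) kempe_equiv_sym[OF g2(2)]] g1(1)
    by (rule kempe_equiv_xmon_diff[OF sym W])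
  moreover have "?p \<noteq> 0"
    using ne by (metis eq_iff_diff_eq_0 keys_mono_poly singleton_inject)
  moreover have "?p \<in> polys d E"
    using calculation(1) K_ideal_subset_polys by blast
  then have "lead_mon ord ?p \<in> {m1, m2}"
    using lead_mon_greatest(1)[OF mo _ \<open>?p \<noteq> 0\<close>] keys_diff[of "mono_poly m1" "mono_poly m2"] by auto
  ultimately show False using m1(1) m2(1) unfolding std_monoms_iff[OF mo] by blast
qed

lemma monom_eq_sum_singles:
  "mdeg m = k \<Longrightarrow> \<exists>S. m = (\<Sum>l\<in>{1..k}. Poly_Mapping.single (S l) 1) \<and> (\<forall>l\<in>{1..k}. S l \<in> Poly_Mapping.keys m)"
proof (induction k arbitrary: m)
  case 0
  then have "\<forall>S\<in>Poly_Mapping.keys m. Poly_Mapping.lookup m S = 0" by (simp add: mdeg_def)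
  then have "m = 0" by (intro poly_mapping_eqI) (auto simp: in_keys_iff)
  then show ?case by simp
next
  case (Suc k)
  then obtain T where T: "T \<in> Poly_Mapping.keys m" by (fastforce simp: mdeg_def)
  define m' where "m' = m - Poly_Mapping.single T 1"
  have m: "m = m' + Poly_Mapping.single T 1"
    using T unfolding m'_def
    by (intro poly_mapping_eqI) (auto simp: lookup_add lookup_minus lookup_single in_keys_iff when_def)
  have "mdeg m' = k" using Suc.prems unfolding m mdeg_add mdeg_single by simp
  then obtain S where S: "m' = (\<Sum>l\<in>{1..k}. Poly_Mapping.single (S l) 1)"
    "\<forall>l\<in>{1..k}. S l \<in> Poly_Mapping.keys m'"
    using Suc.IH by blast
  let ?S = "S(Suc k := T)"
  have "m = (\<Sum>l\<in>{1..Suc k}. Poly_Mapping.single (?S l) 1)"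
    unfolding m S(1) by (simp add: sum.cl_ivl_Suc)
  moreover have "Poly_Mapping.keys m' \<subseteq> Poly_Mapping.keys m"
    unfolding m by (auto simp: in_keys_iff lookup_add)
  then have "\<forall>l\<in>{1..Suc k}. ?S l \<in> Poly_Mapping.keys m"
    using S(2) T by (auto simp: le_Suc_eq)
  ultimately show ?case by blast
qed

lemma std_monom_decomposition:
  assumes mo: "monomial_order d E ord" and m: "m \<in> std_monoms TYPE('a::field) d E ord k"
  obtains S where "\<forall>l\<in>{1..k}. S l \<in> stable_sets d E"
    "\<forall>l\<in>{1..k}. \<forall>l'\<in>{1..k}. l \<noteq> l' \<longrightarrow> S l \<inter> S l' = {}"
    "m = (\<Sum>l\<in>{1..k}. Poly_Mapping.single (S l) 1)"
proof -
  have "m \<in> monoms d E" "mdeg m = k" using m by (auto simp: std_monoms_def)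
  then obtain S where S: "m = (\<Sum>l\<in>{1..k}. Poly_Mapping.single (S l) 1)"
    "\<forall>l\<in>{1..k}. S l \<in> stable_sets d E"
    using monom_eq_sum_singles unfolding monoms_def by blast
  have "S l \<inter> S l' = {}" if "l \<in> {1..k}" "l' \<in> {1..k}" "l \<noteq> l'" for l l'
  proof (rule std_monom_no_overlap[OF mo m])
    have "m = Poly_Mapping.single (S l) 1 + (Poly_Mapping.single (S l') 1 +
        (\<Sum>i\<in>{1..k} - {l} - {l'}. Poly_Mapping.single (S i) 1))"
      unfolding S(1) using that by (intro sum_remove_two) auto
    then show "m = (\<Sum>i\<in>{1..k} - {l} - {l'}. Poly_Mapping.single (S i) 1) +
        (Poly_Mapping.single (S l) 1 + Poly_Mapping.single (S l') 1)"
      by (simp add: ac_simps)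
  qed
  with S that show ?thesis by blast
qed

definition coloring_of :: "nat \<Rightarrow> (nat \<Rightarrow> nat set) \<Rightarrow> coloring" where
  "coloring_of k S = (\<lambda>v. if v \<in> (\<Union>l\<in>{1..k}. S l) then Some (THE l. l \<in> {1..k} \<and> v \<in> S l) else None)"

lemma coloring_of_disjoint_stable:
  assumes stable: "\<forall>l\<in>{1..k}. S l \<in> stable_sets d E"
    and disj: "\<forall>l\<in>{1..k}. \<forall>l'\<in>{1..k}. l \<noteq> l' \<longrightarrow> S l \<inter> S l' = {}"
  shows "coloring_of k S \<in> colorings k E (\<Union>l\<in>{1..k}. S l)"
    and "xmon k (coloring_of k S) = (\<Sum>l\<in>{1..k}. Poly_Mapping.single (S l) 1)"
proof -
  have at_class: "coloring_of k S v = Some l" if "l \<in> {1..k}" "v \<in> S l" for v l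
  proof -
    have "(THE l. l \<in> {1..k} \<and> v \<in> S l) = l" using that disj by blast
    then show ?thesis using that unfolding coloring_of_def by auto
  qed
  have classes: "color_class (coloring_of k S) l = S l" if "l \<in> {1..k}" for l
  proof
    show "S l \<subseteq> color_class (coloring_of k S) l" using at_class that by blast
    show "color_class (coloring_of k S) l \<subseteq> S l"
    proof
      fix v assume "v \<in> color_class (coloring_of k S) l"
      moreover obtain l' where "l' \<in> {1..k}" "v \<in> S l'"
        using calculation unfolding coloring_of_def by (auto split: if_splits)
      ultimately show "v \<in> S l" using at_class by fastforce
    qed
  qed
  show "coloring_of k S \<in> colorings k E (\<Union>l\<in>{1..k}. S l)"
    unfolding colorings_def
  proof (intro CollectI conjI ballI impI)
    show "dom (coloring_of k S) = (\<Union>l\<in>{1..k}. S l)"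
      unfolding coloring_of_def dom_def by force
    show "ran (coloring_of k S) \<subseteq> {1..k}"
      unfolding ran_def using at_class by (force simp: coloring_of_def split: if_splits)
    fix u v assume "u \<in> (\<Union>l\<in>{1..k}. S l)" "v \<in> (\<Union>l\<in>{1..k}. S l)" "E u v"
    then show "coloring_of k S u \<noteq> coloring_of k S v"
      using at_class stable unfolding stable_sets_def by fastforce
  qed
  show "xmon k (coloring_of k S) = (\<Sum>l\<in>{1..k}. Poly_Mapping.single (S l) 1)"
    unfolding xmon_def by (rule sum.cong) (simp_all add: classes)
qed

lemma std_monom_eq_xmon_coloring_of:
  assumes "monomial_order d E ord" "m \<in> std_monoms TYPE('a::field) d E ord k"
  shows "\<exists>S. (\<forall>l\<in>{1..k}. S l \<in> stable_sets d E) \<and>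
    (\<forall>l\<in>{1..k}. \<forall>l'\<in>{1..k}. l \<noteq> l' \<longrightarrow> S l \<inter> S l' = {}) \<and>
    m = (\<Sum>l\<in>{1..k}. Poly_Mapping.single (S l) 1) \<and>
    coloring_of k S \<in> colorings k E (\<Union>l\<in>{1..k}. S l) \<and> m = xmon k (coloring_of k S)"
proof -
  obtain S where S: "\<forall>l\<in>{1..k}. S l \<in> stable_sets d E"
    "\<forall>l\<in>{1..k}. \<forall>l'\<in>{1..k}. l \<noteq> l' \<longrightarrow> S l \<inter> S l' = {}"
    "m = (\<Sum>l\<in>{1..k}. Poly_Mapping.single (S l) 1)"
    by (rule std_monom_decomposition[OF assms])
  then show ?thesis using coloring_of_disjoint_stable[OF S(1,2)] by (intro exI[of _ S]) simp
qed

lemma ex1_std_monom_in_kempe_class: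
  assumes "\<forall>u v. E u v \<longrightarrow> E v u" "W \<subseteq> {1..d}" "monomial_order d E ord" "f \<in> colorings k E W"
  shows "\<exists>!m. m \<in> std_monoms TYPE('a::field) d E ord k \<and> m \<in> kempe_class k E W f"
proof -
  obtain s where "s \<in> kempe_class k E W f" "s \<in> std_monoms TYPE('a) d E ord k"
    by (rule kempe_class_has_std_monom[OF assms])
  with std_monom_kempe_class_unique[OF assms(1-3)] show ?thesis by blast
qed

theorem theorem6p6:
  fixes d k :: nat and E :: "nat \<Rightarrow> nat \<Rightarrow> bool"
    and ord :: "monom \<Rightarrow> monom \<Rightarrow> bool"
  assumes "simple_graph_on d E"
    and "k \<ge> 1"
    and "monomial_order d E ord"
  shows "(\<forall>m\<in>std_monoms TYPE('a::field) d E ord k.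
            (\<exists>S :: nat \<Rightarrow> nat set.
               (\<forall>l\<in>{1..k}. S l \<in> stable_sets d E) \<and>
               (\<forall>l\<in>{1..k}. \<forall>l'\<in>{1..k}. l \<noteq> l' \<longrightarrow> S l \<inter> S l' = {}) \<and>
               m = (\<Sum>l\<in>{1..k}. Poly_Mapping.single (S l) 1) \<and>
               (let W = (\<Union>l\<in>{1..k}. S l);
                    f = (\<lambda>v. if v \<in> W then Some (THE l. l \<in> {1..k} \<and> v \<in> S l) else None)
                in f \<in> colorings k E W \<and> m = xmon k f)))
       \<and> (\<forall>W. W \<subseteq> {1..d} \<longrightarrow>
            (\<forall>f\<in>colorings k E W. \<exists>!m. m \<in> std_monoms TYPE('a) d E ord k \<and>
               (\<exists>g\<in>colorings k E W. m = xmon k g \<and> kempe_equiv k E W g f)))"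
proof -
  have sym: "\<forall>u v. E u v \<longrightarrow> E v u" using assms(1) unfolding simple_graph_on_def by blast
  show ?thesis
    unfolding Let_def coloring_of_def[symmetric] mem_kempe_class_iff[symmetric]
    by (intro conjI ballI allI impI std_monom_eq_xmon_coloring_of[OF assms(3)]
        ex1_std_monom_in_kempe_class[OF sym _ assms(3)])
qed

end
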